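(* Let $\omega=-\frac12+i\frac{\sqrt3}{2}$. Let $T$ be a triangle with vertices $A=a_1+a_2\omega$, $B=b_1+b_2\omega$ and $C=0$, where $a_1,a_2,b_1,b_2$ are nonnegative integers, and suppose $T$ is equable. Then each of the side lengths $|AC|$, $|BC|$, $|AB|$ of $T$ is of the form $\sqrt3\,n$ for some positive integer $n$.
   Context: A triangle is a non-degenerate triangle in the plane $\mathbb{C}\cong\mathbb{R}^2$. A triangle is called equable if its perimeter equals its area. *)

theory Defs
  imports "HOL-Analysis.Analysis"
begin

definition omega :: complex where
  "omega = Complex (-1/2) (sqrt 3 / 2)"

definition tri_area :: "complex \<Rightarrow> complex \<Rightarrow> complex \<Rightarrow> real" where
  "tri_area A B C = \<bar>Im ((B - A) * cnj (C - A))\<bar> / 2"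

definition tri_perimeter :: "complex \<Rightarrow> complex \<Rightarrow> complex \<Rightarrow> real" where
  "tri_perimeter A B C = dist A B + dist B C + dist C A"

definition nondegenerate :: "complex \<Rightarrow> complex \<Rightarrow> complex \<Rightarrow> bool" where
  "nondegenerate A B C \<longleftrightarrow> \<not> collinear {A, B, C}"

definition equable :: "complex \<Rightarrow> complex \<Rightarrow> complex \<Rightarrow> bool" where
  "equable A B C \<longleftrightarrow> nondegenerate A B C \<and> tri_perimeter A B C = tri_area A B C"

end

theory Submission
  imports Defs
begin

text \<open>
  In the coordinates of the Eisenstein lattice every squared side length is an integer
  (the norm form \<open>u\<^sup>2 - u v + v\<^sup>2\<close>) and the area is \<open>\<surd>3/4\<close> times an integer.
  Dividing all side lengths by \<open>\<surd>3\<close>, an equable triangle therefore yields three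
  nonnegative reals with rational squares and rational sum, and such reals are
  themselves rational. A side length \<open>d = \<surd>3 x\<close> with \<open>x\<close> rational and
  \<open>d\<^sup>2 = 3 x\<^sup>2\<close> an integer forces \<open>x\<close> to be an integer, because 3 is prime.
\<close>

lemma Rats_power_in_Ints_imp_Ints:
  fixes y :: real
  assumes "y \<in> \<rat>" and "y ^ n = of_int k" and "n > 0"
  shows "y \<in> \<int>"
proof -
  obtain a b where ab: "y = of_int a / of_int b" "b > 0" "coprime a b"
    using Rats_cases'[OF assms(1)] by metis
  have "(of_int a) ^ n = (of_int k * (of_int b) ^ n :: real)"
    using assms(2) ab(1,2) by (simp add: power_divide divide_eq_eq)
  then have "a ^ n = k * b ^ n"
    by (metis of_int_eq_iff of_int_mult of_int_power)
  then have "b dvd a ^ n"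
    using \<open>n > 0\<close> by (simp add: dvd_mult dvd_power)
  moreover have "coprime (a ^ n) b"
    using ab(3) by simp
  ultimately have "is_unit b"
    using coprime_absorb_right by blast
  then have "b = 1"
    using ab(2) by simp
  then show ?thesis
    using ab(1) by simp
qed

lemma Ints_if_Rats_and_prime_times_power2_Ints:
  fixes x :: real and p :: nat
  assumes "prime p" and "x \<in> \<rat>" and "of_nat p * x\<^sup>2 \<in> \<int>"
  shows "x \<in> \<int>"
proof -
  obtain m where m: "of_nat p * x\<^sup>2 = of_int m"
    using assms(3) by (auto elim: Ints_cases)
  have square: "(of_nat p * x)\<^sup>2 = of_int (int p * m)"
    using m by (simp add: power2_eq_square algebra_simps)
  then have "of_nat p * x \<in> \<int>"
    using assms(2) by (intro Rats_power_in_Ints_imp_Ints[of _ 2 "int p * m"]) simp_all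
  then obtain k where k: "of_nat p * x = of_int k"
    by (auto elim: Ints_cases)
  have "of_int (k\<^sup>2) = (of_int (int p * m) :: real)"
    using square[unfolded k] by simp
  then have "int p dvd k\<^sup>2"
    by (simp only: of_int_eq_iff) simp
  then have "int p dvd k"
    using assms(1) prime_dvd_power_int by (simp add: prime_nat_iff_prime)
  then obtain j where "k = int p * j" ..
  then have "x = of_int j"
    using k assms(1) by (simp add: prime_gt_0_nat)
  then show ?thesis
    by simp
qed

text \<open>
  With \<open>s = x + y + z\<close>, the number \<open>q = s\<^sup>2 + z\<^sup>2 - x\<^sup>2 - y\<^sup>2 = 2 x y + 2 s z\<close> is rational;
  squaring \<open>q\<close> shows that \<open>w = x y z\<close> is rational, and then so is \<open>z = (2 w + 2 s z\<^sup>2) / q\<close>.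
\<close>
lemma Rats_summand_if_Rats_squares:
  fixes x y z :: real
  assumes "x \<ge> 0" "y \<ge> 0" "z \<ge> 0"
    and "x\<^sup>2 \<in> \<rat>" "y\<^sup>2 \<in> \<rat>" "z\<^sup>2 \<in> \<rat>" "x + y + z \<in> \<rat>"
  shows "z \<in> \<rat>"
proof (cases "z = 0")
  case True
  then show ?thesis
    by simp
next
  case False
  define s where "s = x + y + z"
  define q where "q = 2 * x * y + 2 * s * z"
  have s_pos: "s > 0" and s_Rats: "s \<in> \<rat>"
    using assms False by (auto simp: s_def)
  have "q = s\<^sup>2 + z\<^sup>2 - x\<^sup>2 - y\<^sup>2"
    by (simp add: q_def s_def power2_eq_square algebra_simps)
  then have q_Rats: "q \<in> \<rat>"
    using assms s_Rats by simp
  have q_pos: "q > 0"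
    using assms False s_pos by (simp add: q_def add_nonneg_pos)
  define w where "w = x * y * z"
  have "q\<^sup>2 = 4 * x\<^sup>2 * y\<^sup>2 + 8 * s * w + 4 * s\<^sup>2 * z\<^sup>2"
    by (simp add: q_def w_def power2_eq_square algebra_simps)
  then have "w = (q\<^sup>2 - 4 * x\<^sup>2 * y\<^sup>2 - 4 * s\<^sup>2 * z\<^sup>2) / (8 * s)"
    using s_pos by simp
  then have w_Rats: "w \<in> \<rat>"
    using assms q_Rats s_Rats by simp
  have z_eq: "z = (2 * w + 2 * s * z\<^sup>2) / q"
    using q_pos by (simp add: q_def w_def field_simps power2_eq_square)
  have "(2 * w + 2 * s * z\<^sup>2) / q \<in> \<rat>"
    using w_Rats assms(6) s_Rats q_Rats by (intro Rats_divide Rats_add Rats_mult) simp_all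
  with z_eq show ?thesis
    by (rule ssubst)
qed

lemma Rats_summands_if_Rats_squares:
  fixes x y z :: real
  assumes "x \<ge> 0" "y \<ge> 0" "z \<ge> 0"
    and "x\<^sup>2 \<in> \<rat>" "y\<^sup>2 \<in> \<rat>" "z\<^sup>2 \<in> \<rat>" "x + y + z \<in> \<rat>"
  shows "x \<in> \<rat> \<and> y \<in> \<rat> \<and> z \<in> \<rat>"
proof (intro conjI)
  have "y + z + x \<in> \<rat>" "x + z + y \<in> \<rat>"
    using assms(7) by (simp_all add: ac_simps)
  then show "x \<in> \<rat>" "y \<in> \<rat>" "z \<in> \<rat>"
    using assms by (auto intro: Rats_summand_if_Rats_squares)
qed

lemma sqrt3_multiple_if_Rats:
  fixes d :: real
  assumes "d > 0" and "d\<^sup>2 \<in> \<int>" and "d / sqrt 3 \<in> \<rat>"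
  shows "\<exists>n::nat. n > 0 \<and> d = sqrt 3 * real n"
proof -
  define x where "x = d / sqrt 3"
  have "of_nat 3 * x\<^sup>2 = d\<^sup>2"
    by (simp add: x_def power_divide)
  then have "x \<in> \<int>"
    using assms(2,3) Ints_if_Rats_and_prime_times_power2_Ints[of 3 x] by (simp add: x_def)
  then obtain k where k: "x = of_int k"
    by (auto elim: Ints_cases)
  have "x > 0"
    using assms(1) by (simp add: x_def)
  then have "k > 0"
    using k by simp
  moreover have "d = sqrt 3 * x"
    by (simp add: x_def)
  ultimately show ?thesis
    using k by (intro exI[of _ "nat k"]) simp
qed

definition eisenstein_ints :: "complex set" where
  "eisenstein_ints = {of_int u + of_int v * omega | u v. True}"

lemma eisenstein_intsI: "of_int u + of_int v * omega \<in> eisenstein_ints"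
  by (auto simp: eisenstein_ints_def)

lemma eisenstein_intsE:
  assumes "z \<in> eisenstein_ints"
  obtains u v where "z = of_int u + of_int v * omega"
  using assms by (auto simp: eisenstein_ints_def)

lemma eisenstein_ints_diff:
  assumes "z \<in> eisenstein_ints" and "w \<in> eisenstein_ints"
  shows "z - w \<in> eisenstein_ints"
proof -
  obtain u v u' v' where "z = of_int u + of_int v * omega" "w = of_int u' + of_int v' * omega"
    using assms by (elim eisenstein_intsE)
  then have "z - w = of_int (u - u') + of_int (v - v') * omega"
    by (simp add: algebra_simps)
  then show ?thesis
    by (simp only: eisenstein_intsI)
qed

lemma norm_power2_eisenstein:
  "(norm (of_int u + of_int v * omega))\<^sup>2 = of_int (u\<^sup>2 - u * v + v\<^sup>2)"
proof -
  have "of_int u + of_int v * omega = Complex (of_int u - of_int v / 2) (of_int v * sqrt 3 / 2)"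
    by (simp add: omega_def complex_eq_iff)
  then have "(norm (of_int u + of_int v * omega))\<^sup>2
             = (of_int u - of_int v / 2)\<^sup>2 + (of_int v)\<^sup>2 * (sqrt 3)\<^sup>2 / 4"
    by (simp add: cmod_power2 power_mult_distrib power_divide)
  also have "\<dots> = of_int (u\<^sup>2 - u * v + v\<^sup>2)"
    by (simp add: power2_eq_square algebra_simps)
  finally show ?thesis .
qed

lemma norm_power2_in_Ints_if_eisenstein:
  "z \<in> eisenstein_ints \<Longrightarrow> (norm z)\<^sup>2 \<in> \<int>"
  by (elim eisenstein_intsE) (simp only: norm_power2_eisenstein Ints_of_int)

lemma tri_area_eisenstein:
  "tri_area (of_int a1 + of_int a2 * omega) (of_int b1 + of_int b2 * omega) 0
     = sqrt 3 / 4 * \<bar>of_int (a1 * b2 - a2 * b1)\<bar>"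
proof -
  have Im_eq: "Im ((of_int b1 + of_int b2 * omega - (of_int a1 + of_int a2 * omega))
             * cnj (0 - (of_int a1 + of_int a2 * omega)))
        = sqrt 3 / 2 * of_int (a2 * b1 - a1 * b2)"
    by (simp add: omega_def field_simps)
  show ?thesis
    unfolding tri_area_def Im_eq by (simp add: abs_mult abs_minus_commute)
qed

lemma tri_area_div_sqrt3_Rats_if_eisenstein:
  assumes "z \<in> eisenstein_ints" and "w \<in> eisenstein_ints"
  shows "tri_area z w 0 / sqrt 3 \<in> \<rat>"
proof -
  obtain a1 a2 b1 b2 where "z = of_int a1 + of_int a2 * omega" "w = of_int b1 + of_int b2 * omega"
    using assms by (elim eisenstein_intsE)
  then have area: "tri_area z w 0 / sqrt 3 = \<bar>of_int (a1 * b2 - a2 * b1)\<bar> / 4"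
    by (simp add: tri_area_eisenstein)
  show ?thesis
    unfolding area by (intro Rats_divide) auto
qed

lemma nondegenerate_imp_distinct:
  "nondegenerate A B C \<Longrightarrow> A \<noteq> B \<and> B \<noteq> C \<and> C \<noteq> A"
  by (auto simp: nondegenerate_def insert_commute)

theorem mainTheorem2:
  fixes a1 a2 b1 b2 :: nat
  defines "A \<equiv> of_nat a1 + of_nat a2 * omega"
      and "B \<equiv> of_nat b1 + of_nat b2 * omega"
  assumes "equable A B 0"
  shows "(\<exists>n::nat. n > 0 \<and> dist A 0 = sqrt 3 * real n)
       \<and> (\<exists>n::nat. n > 0 \<and> dist B 0 = sqrt 3 * real n)
       \<and> (\<exists>n::nat. n > 0 \<and> dist A B = sqrt 3 * real n)"
proof -
  have nondeg: "nondegenerate A B 0" and perimeter: "tri_perimeter A B 0 = tri_area A B 0"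
    using assms(3) by (auto simp: equable_def)
  have lattice: "A \<in> eisenstein_ints" "B \<in> eisenstein_ints"
    unfolding A_def B_def by (metis eisenstein_intsI of_int_of_nat_eq)+
  have squares: "(dist A 0)\<^sup>2 \<in> \<int>" "(dist B 0)\<^sup>2 \<in> \<int>" "(dist A B)\<^sup>2 \<in> \<int>"
    using lattice by (simp_all add: dist_norm norm_power2_in_Ints_if_eisenstein eisenstein_ints_diff)
  have "dist A 0 / sqrt 3 + dist B 0 / sqrt 3 + dist A B / sqrt 3 = tri_perimeter A B 0 / sqrt 3"
    by (simp add: tri_perimeter_def dist_commute add_divide_distrib)
  also have "\<dots> = tri_area A B 0 / sqrt 3"
    by (simp only: perimeter)
  finally have "dist A 0 / sqrt 3 + dist B 0 / sqrt 3 + dist A B / sqrt 3 \<in> \<rat>"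
    using tri_area_div_sqrt3_Rats_if_eisenstein[OF lattice] by simp
  moreover have "(d / sqrt 3)\<^sup>2 \<in> \<rat>" if "d\<^sup>2 \<in> \<int>" for d :: real
    using that Ints_subset_Rats by (auto simp: power_divide)
  ultimately have rationals: "dist A 0 / sqrt 3 \<in> \<rat>" "dist B 0 / sqrt 3 \<in> \<rat>" "dist A B / sqrt 3 \<in> \<rat>"
    using Rats_summands_if_Rats_squares squares by (metis divide_nonneg_nonneg real_sqrt_ge_zero zero_le_dist zero_le_numeral)+
  have positive: "dist A 0 > 0" "dist B 0 > 0" "dist A B > 0"
    using nondegenerate_imp_distinct[OF nondeg] by auto
  show ?thesis
    by (intro conjI sqrt3_multiple_if_Rats positive squares rationals)
qed

end
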